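(* Let $(G,\cdot)$ be a loop with identity $e$ and $(H,\cdot)$ a non-trivial subloop such that $(xs\cdot z)s=x(sz\cdot s)$ for all $x,z\in G$, $s\in H$. Let $(U,V,W)\in\mathrm{S_{2nd}LAUT}(G_H)\cap\mathrm{S_{2nd}RAUT}(G_H)$, $s_1=eU$ and $s_2=eV$. Then $A=UR_{s_1}^{-1}\in\mathrm{S_{2nd}LPAUT}(G_H)\cap\mathrm{S_{2nd}RPAUT}(G_H)$ with second Smarandache left companion and second Smarandache right companion $c=s_1s_2\cdot s_1$, and $$(U,V,W)=(A,AR_c,AR_c)\,(R_{s_1}^{-1},L_{s_1}R_{s_1},R_{s_1})^{-1}.$$
   Context: Juxtaposition binds more tightly than $\cdot$. Maps are written on the right and composed left to right; $xR_s=x\cdot s$, $xL_s=s\cdot x$; triples are multiplied componentwise. $SYM(G)$ is the group of bijections of $G$; $SSYM(G_H)=\{A\in SYM(G):HA=H\}$. $\mathrm{S_{2nd}RAUT}(G_H)$: triples $(U,V,W)$ with $U,W\in SYM(G)$, $V\in SSYM(G_H)$, $xU\cdot sV=(x\cdot s)W$ for all $x\in G$, $s\in H$. $\mathrm{S_{2nd}LAUT}(G_H)$: triples $(U,V,W)$ with $V,W\in SYM(G)$, $U\in SSYM(G_H)$, $sU\cdot yV=(s\cdot y)W$ for all $y\in G$, $s\in H$. $\mathrm{S_{2nd}RPAUT}(G_H)$ (resp. $\mathrm{S_{2nd}LPAUT}(G_H)$) is the set of $A\in SSYM(G_H)$ for which there is $c\in H$ with $(A,AR_c,AR_c)\in\mathrm{S_{2nd}RAUT}(G_H)$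 (resp. $\in\mathrm{S_{2nd}LAUT}(G_H)$); $c$ is called a second Smarandache right (resp. left) companion of $A$. *)

theory Defs
  imports Main
begin

(* The loop is the whole type 'a with multiplication m and identity e.
   Maps act on the right and compose left to right: "x U V" = (V \<circ> U) x. *)

definition loop :: "('a \<Rightarrow> 'a \<Rightarrow> 'a) \<Rightarrow> 'a \<Rightarrow> bool" where
  "loop m e \<longleftrightarrow> (\<forall>x. m e x = x \<and> m x e = x)
     \<and> (\<forall>a b. \<exists>!x. m a x = b) \<and> (\<forall>a b. \<exists>!y. m y a = b)"

definition subloop :: "('a \<Rightarrow> 'a \<Rightarrow> 'a) \<Rightarrow> 'a set \<Rightarrow> bool" where
  "subloop m H \<longleftrightarrow> H \<noteq> {}
     \<and> (\<forall>a\<in>H. \<forall>b\<in>H. m a b \<in> H)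
     \<and> (\<forall>a\<in>H. \<forall>b\<in>H. \<forall>x. m a x = b \<longrightarrow> x \<in> H)
     \<and> (\<forall>a\<in>H. \<forall>b\<in>H. \<forall>y. m y a = b \<longrightarrow> y \<in> H)"

definition Rm :: "('a \<Rightarrow> 'a \<Rightarrow> 'a) \<Rightarrow> 'a \<Rightarrow> 'a \<Rightarrow> 'a" where
  "Rm m s = (\<lambda>x. m x s)"

definition Lm :: "('a \<Rightarrow> 'a \<Rightarrow> 'a) \<Rightarrow> 'a \<Rightarrow> 'a \<Rightarrow> 'a" where
  "Lm m s = (\<lambda>x. m s x)"

definition SSYM :: "'a set \<Rightarrow> ('a \<Rightarrow> 'a) set" where
  "SSYM H = {A. bij A \<and> A ` H = H}"

definition S2RAUT :: "('a \<Rightarrow> 'a \<Rightarrow> 'a) \<Rightarrow> 'a set \<Rightarrow> (('a \<Rightarrow> 'a) \<times> ('a \<Rightarrow> 'a) \<times> ('a \<Rightarrow> 'a)) set" where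
  "S2RAUT m H = {(U, V, W). bij U \<and> bij W \<and> V \<in> SSYM H
      \<and> (\<forall>x. \<forall>s\<in>H. m (U x) (V s) = W (m x s))}"

definition S2LAUT :: "('a \<Rightarrow> 'a \<Rightarrow> 'a) \<Rightarrow> 'a set \<Rightarrow> (('a \<Rightarrow> 'a) \<times> ('a \<Rightarrow> 'a) \<times> ('a \<Rightarrow> 'a)) set" where
  "S2LAUT m H = {(U, V, W). bij V \<and> bij W \<and> U \<in> SSYM H
      \<and> (\<forall>y. \<forall>s\<in>H. m (U s) (V y) = W (m s y))}"

(* A R_c (first A, then R_c) is  Rm m c \<circ> A *)
definition S2RPAUT :: "('a \<Rightarrow> 'a \<Rightarrow> 'a) \<Rightarrow> 'a set \<Rightarrow> ('a \<Rightarrow> 'a) set" where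
  "S2RPAUT m H = {A \<in> SSYM H. \<exists>c\<in>H. (A, Rm m c \<circ> A, Rm m c \<circ> A) \<in> S2RAUT m H}"

definition S2LPAUT :: "('a \<Rightarrow> 'a \<Rightarrow> 'a) \<Rightarrow> 'a set \<Rightarrow> ('a \<Rightarrow> 'a) set" where
  "S2LPAUT m H = {A \<in> SSYM H. \<exists>c\<in>H. (A, Rm m c \<circ> A, Rm m c \<circ> A) \<in> S2LAUT m H}"

definition tmul :: "('a \<Rightarrow> 'a) \<times> ('a \<Rightarrow> 'a) \<times> ('a \<Rightarrow> 'a) \<Rightarrow> ('a \<Rightarrow> 'a) \<times> ('a \<Rightarrow> 'a) \<times> ('a \<Rightarrow> 'a)
    \<Rightarrow> ('a \<Rightarrow> 'a) \<times> ('a \<Rightarrow> 'a) \<times> ('a \<Rightarrow> 'a)" where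
  "tmul T T' = (case T of (U, V, W) \<Rightarrow> case T' of (U', V', W') \<Rightarrow> (U' \<circ> U, V' \<circ> V, W' \<circ> W))"

definition tinv :: "('a \<Rightarrow> 'a) \<times> ('a \<Rightarrow> 'a) \<times> ('a \<Rightarrow> 'a) \<Rightarrow> ('a \<Rightarrow> 'a) \<times> ('a \<Rightarrow> 'a) \<times> ('a \<Rightarrow> 'a)" where
  "tinv T = (case T of (U, V, W) \<Rightarrow> (inv U, inv V, inv W))"

end

theory Submission
  imports Defs
begin

text \<open>Putting \<open>s = e\<close> in the two autotopism laws gives \<open>xW = xU \<cdot> s\<^sub>2\<close> and
  \<open>yW = s\<^sub>1 \<cdot> yV\<close>. Writing \<open>U = A R\<^sub>s\<^sub>1\<close>, the identity \<open>(xs \<cdot> z)s = x(sz \<cdot> s)\<close> with \<open>s = s\<^sub>1\<close>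
  first shows \<open>A R\<^sub>c = W R\<^sub>s\<^sub>1 = V L\<^sub>s\<^sub>1 R\<^sub>s\<^sub>1\<close>, and then
  \<open>xA \<cdot> yAR\<^sub>c = xA \<cdot> (s\<^sub>1 \<cdot> yV)s\<^sub>1 = (xU \<cdot> yV)s\<^sub>1\<close>, so every instance of the autotopism law
  for \<open>(U, V, W)\<close> becomes one for \<open>(A, AR\<^sub>c, AR\<^sub>c)\<close>. The factorisation is a rereading of
  \<open>U = A R\<^sub>s\<^sub>1\<close>, \<open>V = A R\<^sub>c (L\<^sub>s\<^sub>1 R\<^sub>s\<^sub>1)\<^sup>-\<^sup>1\<close> and \<open>W = A R\<^sub>c R\<^sub>s\<^sub>1\<^sup>-\<^sup>1\<close>.\<close>

definition right_Bol_over :: "('a \<Rightarrow> 'a \<Rightarrow> 'a) \<Rightarrow> 'a set \<Rightarrow> bool" where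
  "right_Bol_over m H \<longleftrightarrow> (\<forall>x z. \<forall>s\<in>H. m (m (m x s) z) s = m x (m (m s z) s))"

lemma loop_bij_Rm:
  assumes "loop m e"
  shows "bij (Rm m s)"
  using assms unfolding loop_def bij_iff Rm_def by blast

lemma loop_bij_Lm:
  assumes "loop m e"
  shows "bij (Lm m s)"
  using assms unfolding loop_def bij_iff Lm_def by blast

lemma subloop_mult_closed:
  assumes "subloop m H" and "a \<in> H" and "b \<in> H"
  shows "m a b \<in> H"
  using assms unfolding subloop_def by blast

lemma subloop_identity:
  assumes "loop m e" and "subloop m H"
  shows "e \<in> H"
proof -
  obtain a where "a \<in> H"
    using assms(2) unfolding subloop_def by blast
  moreover have "m a e = a"
    using assms(1) unfolding loop_def by blast
  ultimately show ?thesis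
    using assms(2) unfolding subloop_def by blast
qed

lemma Rm_in_SSYM:
  assumes "loop m e" and "subloop m H" and "c \<in> H"
  shows "Rm m c \<in> SSYM H"
proof -
  have "Rm m c ` H \<subseteq> H"
    using assms(2,3) subloop_mult_closed by (auto simp: Rm_def)
  moreover have "H \<subseteq> Rm m c ` H"
  proof
    fix h assume "h \<in> H"
    obtain y where "m y c = h"
      using assms(1) unfolding loop_def by blast
    with \<open>h \<in> H\<close> assms(2,3) have "y \<in> H"
      unfolding subloop_def by blast
    with \<open>m y c = h\<close> show "h \<in> Rm m c ` H"
      by (auto simp: Rm_def)
  qed
  ultimately show ?thesis
    using loop_bij_Rm[OF assms(1)] by (auto simp: SSYM_def)
qed

lemma SSYM_inv:
  assumes "A \<in> SSYM H"
  shows "inv A \<in> SSYM H"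
  using assms image_inv_f_f[of A H] bij_imp_bij_inv bij_is_inj
  by (fastforce simp: SSYM_def)

lemma SSYM_comp:
  assumes "A \<in> SSYM H" and "B \<in> SSYM H"
  shows "B \<circ> A \<in> SSYM H"
  using assms unfolding SSYM_def by (metis (mono_tags) mem_Collect_eq bij_comp image_comp)

lemma S2RAUT_third_component:
  assumes "(U, V, W) \<in> S2RAUT m H" and "loop m e" and "e \<in> H"
  shows "W x = m (U x) (V e)"
  using assms unfolding S2RAUT_def loop_def by force

lemma S2LAUT_third_component:
  assumes "(U, V, W) \<in> S2LAUT m H" and "loop m e" and "e \<in> H"
  shows "W y = m (U e) (V y)"
  using assms unfolding S2LAUT_def loop_def by force

lemma companion_shift:
  assumes "right_Bol_over m H" and "s1 \<in> H" and "\<And>x. W x = m (m (A x) s1) s2"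
  shows "Rm m (m (m s1 s2) s1) \<circ> A = Rm m s1 \<circ> W"
  using assms unfolding right_Bol_over_def by (simp add: Rm_def fun_eq_iff)

lemma companion_law:
  assumes "right_Bol_over m H" and "s1 \<in> H"
    and "\<And>x. U x = m (A x) s1" and "\<And>y. W y = m s1 (V y)"
    and shift: "Rm m c \<circ> A = Rm m s1 \<circ> W"
    and "m (U x) (V y) = W (m x y)"
  shows "m (A x) ((Rm m c \<circ> A) y) = (Rm m c \<circ> A) (m x y)"
proof -
  have shifted: "m (A z) c = m (W z) s1" for z
    using fun_cong[OF shift, of z] by (simp add: Rm_def)
  have "m (A x) ((Rm m c \<circ> A) y) = m (A x) (m (m s1 (V y)) s1)"
    by (simp add: Rm_def shifted assms(4))
  also have "\<dots> = m (m (U x) (V y)) s1"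
    using assms(1-3) unfolding right_Bol_over_def by simp
  also have "\<dots> = (Rm m c \<circ> A) (m x y)"
    by (simp add: Rm_def shifted assms(6))
  finally show ?thesis .
qed

lemma S2LAUT_S2RAUT_diagonalI:
  assumes "A \<in> SSYM H" and "B \<in> SSYM H"
    and "\<And>x y. x \<in> H \<or> y \<in> H \<Longrightarrow> m (A x) (B y) = B (m x y)"
  shows "(A, B, B) \<in> S2LAUT m H \<inter> S2RAUT m H"
  using assms by (auto simp: S2LAUT_def S2RAUT_def SSYM_def)

lemma S2LAUT_S2RAUT_companion_mem:
  assumes loop: "loop m e" and sub: "subloop m H"
    and triple: "(U, V, W) \<in> S2LAUT m H \<inter> S2RAUT m H"
  shows "inv (Rm m (U e)) \<circ> U \<in> SSYM H" and "m (m (U e) (V e)) (U e) \<in> H"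
proof -
  have U_SSYM: "U \<in> SSYM H" and "V \<in> SSYM H"
    using triple by (auto simp: S2LAUT_def S2RAUT_def)
  moreover have "e \<in> H" using subloop_identity[OF loop sub] .
  ultimately have s1H: "U e \<in> H" and s2H: "V e \<in> H"
    by (auto simp: SSYM_def)
  show "inv (Rm m (U e)) \<circ> U \<in> SSYM H"
    using SSYM_comp[OF U_SSYM SSYM_inv[OF Rm_in_SSYM[OF loop sub s1H]]] .
  show "m (m (U e) (V e)) (U e) \<in> H"
    using subloop_mult_closed[OF sub subloop_mult_closed[OF sub s1H s2H] s1H] .
qed

lemma S2LAUT_S2RAUT_companion:
  assumes loop: "loop m e" and sub: "subloop m H" and bol: "right_Bol_over m H"
    and triple: "(U, V, W) \<in> S2LAUT m H \<inter> S2RAUT m H"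
    and A_def: "A = inv (Rm m (U e)) \<circ> U" and c_def: "c = m (m (U e) (V e)) (U e)"
  shows "Rm m c \<circ> A = Rm m (U e) \<circ> W"
    and "Rm m c \<circ> A = (Rm m (U e) \<circ> Lm m (U e)) \<circ> V"
    and "x \<in> H \<or> y \<in> H \<Longrightarrow> m (A x) ((Rm m c \<circ> A) y) = (Rm m c \<circ> A) (m x y)"
proof -
  have eH: "e \<in> H" using subloop_identity[OF loop sub] .
  define s1 where "s1 = U e"
  have s1H: "s1 \<in> H"
    using triple eH by (auto simp: s1_def S2LAUT_def SSYM_def)
  have U_eq: "U x = m (A x) s1" for x
  proof -
    have "Rm m s1 (A x) = U x"
      unfolding A_def s1_def[symmetric] comp_apply
      by (rule surj_f_inv_f[OF bij_is_surj[OF loop_bij_Rm[OF loop]]])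
    then show ?thesis unfolding Rm_def by (rule sym)
  qed
  have W_right: "W x = m (m (A x) s1) (V e)" for x
    using S2RAUT_third_component[OF _ loop eH, of U V W x] triple by (simp add: U_eq)
  have W_left: "W y = m s1 (V y)" for y
    using S2LAUT_third_component[OF _ loop eH, of U V W y] triple by (simp add: s1_def)
  have shift: "Rm m c \<circ> A = Rm m s1 \<circ> W"
    unfolding c_def s1_def[symmetric] using companion_shift[OF bol s1H W_right] .
  then show "Rm m c \<circ> A = Rm m (U e) \<circ> W"
    unfolding s1_def .
  from shift show "Rm m c \<circ> A = (Rm m (U e) \<circ> Lm m (U e)) \<circ> V"
    using W_left by (auto simp: s1_def Lm_def)
  assume "x \<in> H \<or> y \<in> H"
  then have "m (U x) (V y) = W (m x y)"
    using triple by (auto simp: S2LAUT_def S2RAUT_def)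
  then show "m (A x) ((Rm m c \<circ> A) y) = (Rm m c \<circ> A) (m x y)"
    using companion_law[OF bol s1H U_eq W_left shift] by blast
qed

lemma tmul_tinv_cancel:
  assumes "inj P" and "inj Q" and "inj R"
  shows "tmul (P \<circ> U, Q \<circ> V, R \<circ> W) (tinv (P, Q, R)) = (U, V, W)"
  using assms by (simp add: tmul_def tinv_def comp_assoc[symmetric])

theorem theorem3p8:
  fixes m :: "'a \<Rightarrow> 'a \<Rightarrow> 'a" and e :: 'a and H :: "'a set"
    and U V W :: "'a \<Rightarrow> 'a"
  assumes "loop m e"
    and "subloop m H"
    and "H \<noteq> {e}"
    and "\<forall>x z. \<forall>s\<in>H. m (m (m x s) z) s = m x (m (m s z) s)"
    and "(U, V, W) \<in> S2LAUT m H \<inter> S2RAUT m H"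
  shows "let s1 = U e; s2 = V e; A = inv (Rm m s1) \<circ> U; c = m (m s1 s2) s1 in
    A \<in> S2LPAUT m H \<inter> S2RPAUT m H
    \<and> c \<in> H
    \<and> (A, Rm m c \<circ> A, Rm m c \<circ> A) \<in> S2LAUT m H
    \<and> (A, Rm m c \<circ> A, Rm m c \<circ> A) \<in> S2RAUT m H
    \<and> (U, V, W) = tmul (A, Rm m c \<circ> A, Rm m c \<circ> A)
                    (tinv (inv (Rm m s1), Rm m s1 \<circ> Lm m s1, Rm m s1))"
proof -
  note loop = assms(1) and sub = assms(2) and triple = assms(5)
  have bol: "right_Bol_over m H"
    using assms(4) unfolding right_Bol_over_def .
  define s1 s2 where "s1 = U e" and "s2 = V e"
  define A c where "A = inv (Rm m s1) \<circ> U" and "c = m (m s1 s2) s1"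
  have A_SSYM: "A \<in> SSYM H" and cH: "c \<in> H"
    unfolding A_def c_def s1_def s2_def using S2LAUT_S2RAUT_companion_mem[OF loop sub triple] .
  note companion = S2LAUT_S2RAUT_companion[OF loop sub bol triple A_def[unfolded s1_def]
      c_def[unfolded s1_def s2_def], folded s1_def]
  have LR: "(A, Rm m c \<circ> A, Rm m c \<circ> A) \<in> S2LAUT m H \<inter> S2RAUT m H"
    using S2LAUT_S2RAUT_diagonalI[OF A_SSYM SSYM_comp[OF A_SSYM Rm_in_SSYM[OF loop sub cH]]]
      companion(3) by blast
  have bij_R: "bij (Rm m s1)" and bij_RL: "bij (Rm m s1 \<circ> Lm m s1)"
    using loop_bij_Rm[OF loop] bij_comp[OF loop_bij_Lm[OF loop] loop_bij_Rm[OF loop]] .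
  have "(U, V, W) = tmul (inv (Rm m s1) \<circ> U, (Rm m s1 \<circ> Lm m s1) \<circ> V, Rm m s1 \<circ> W)
                    (tinv (inv (Rm m s1), Rm m s1 \<circ> Lm m s1, Rm m s1))"
    using tmul_tinv_cancel[OF bij_is_inj[OF bij_imp_bij_inv[OF bij_R]] bij_is_inj[OF bij_RL]
        bij_is_inj[OF bij_R], symmetric] .
  then have "(U, V, W) = tmul (A, Rm m c \<circ> A, Rm m c \<circ> A)
                    (tinv (inv (Rm m s1), Rm m s1 \<circ> Lm m s1, Rm m s1))"
    unfolding A_def[symmetric] companion(1,2)[symmetric] .
  with LR cH A_SSYM show ?thesis
    unfolding Let_def s1_def[symmetric] s2_def[symmetric] A_def[symmetric] c_def[symmetric]
    by (auto simp: S2LPAUT_def S2RPAUT_def)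
qed

end
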